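(* Let $K=4m$ with $m\ge 5$ and suppose $t=KM/N=K-4$. Then the D2D coded caching rate $R=N/M-1$ is achievable with subpacketization $$F=\frac{K(K-4)\big(3K(K-4)+8\big)}{8}.$$
   Context: D2D coded caching setting: there are $N\ge 1$ files $W_1,\dots,W_N$ and $K\ge 2$ users, each with a cache of size $M$ files, $0<M\le N$, and $t:=KM/N$ is assumed to be a positive integer. A D2D coded caching scheme with (uncoded placement and) subpacketization $F\in\mathbb{N}_+$ is defined as follows. Fix a packet size $b\ge 1$; each file is a sequence of $F$ packets $W_n=(W_n^{(1)},\dots,W_n^{(F)})$, $W_n^{(j)}\in\{0,1\}^b$. Placement: each user $k\in[K]$ stores the packets $\{W_n^{(j)}:(n,j)\in Z_k\}$ for a fixed index set $Z_k\subseteq[N]\times[F]$ with $|Z_k|\le MF$ (independent of demands and file contents). Delivery: for every demand vector $\mathbf d=(d_1,\dots,d_K)\in[N]^K$, each user $k$ broadcasts to all other users $\ell_k(\mathbf d)\in\mathbb{N}$ blocks in $\{0,1\}^b$, each a deterministic function of the packets stored by user $k$; it is required that for all file contents each user $k$ can recover all $F$ packets of $W_{d_k}$ from its stored packets and the blocks sent by the other users. The rate is $R=\max_{\mathbf d}\frac{1}{F}\sum_{k=1}^K\ell_k(\mathbf d)$ (transmitted bits normalized by the file size $Fb$). The rate $R$ is achievable with subpacketization $F$ if such a scheme with rate $R$ exists for every packet size $b\ge 1$. *)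

theory Defs
  imports Complex_Main "HOL-Library.FuncSet"
begin

text \<open>Files are indexed by 1..N, packets by 1..F, users by 1..K.\<close>

definition contents :: "nat \<Rightarrow> nat \<Rightarrow> nat \<Rightarrow> (nat \<times> nat \<Rightarrow> bool list) set" where
  "contents N F b = {W. \<forall>n\<in>{1..N}. \<forall>j\<in>{1..F}. length (W (n, j)) = b}"

definition demands :: "nat \<Rightarrow> nat \<Rightarrow> (nat \<Rightarrow> nat) set" where
  "demands N K = PiE {1..K} (\<lambda>_. {1..N})"

definition stored :: "(nat \<times> nat) set \<Rightarrow> (nat \<times> nat \<Rightarrow> bool list) \<Rightarrow> (nat \<times> nat \<Rightarrow> bool list)" where
  "stored Z W = (\<lambda>p. if p \<in> Z then W p else [])"

text \<open>A D2D coded caching scheme (uncoded placement) with N files, K users, cache size M,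
  subpacketization F, packet size b, and rate R.
  Z k: placement index set of user k;
  enc d k: blocks broadcast by user k under demand d, a function of its stored packets;
  ell d k: number of blocks sent by user k under demand d;
  dec d k: decoder of user k from its stored packets and the transmissions of the other users.\<close>
definition d2d_scheme ::
  "nat \<Rightarrow> nat \<Rightarrow> real \<Rightarrow> nat \<Rightarrow> nat \<Rightarrow> real \<Rightarrow> bool" where
  "d2d_scheme N K M F b R \<longleftrightarrow>
    (\<exists>(Z :: nat \<Rightarrow> (nat \<times> nat) set)
      (enc :: (nat \<Rightarrow> nat) \<Rightarrow> nat \<Rightarrow> (nat \<times> nat \<Rightarrow> bool list) \<Rightarrow> bool list list)
      (ell :: (nat \<Rightarrow> nat) \<Rightarrow> nat \<Rightarrow> nat)
      (dec :: (nat \<Rightarrow> nat) \<Rightarrow> nat \<Rightarrow> (nat \<times> nat \<Rightarrow> bool list)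
               \<Rightarrow> (nat \<Rightarrow> bool list list) \<Rightarrow> nat \<Rightarrow> bool list).
      (\<forall>k\<in>{1..K}. Z k \<subseteq> {1..N} \<times> {1..F} \<and> real (card (Z k)) \<le> M * real F) \<and>
      (\<forall>d\<in>demands N K. \<forall>k\<in>{1..K}. \<forall>W\<in>contents N F b.
          length (enc d k (stored (Z k) W)) = ell d k \<and>
          (\<forall>blk\<in>set (enc d k (stored (Z k) W)). length blk = b)) \<and>
      (\<forall>d\<in>demands N K. \<forall>k\<in>{1..K}. \<forall>W\<in>contents N F b. \<forall>j\<in>{1..F}.
          dec d k (stored (Z k) W)
              (\<lambda>i. if i \<in> {1..K} \<and> i \<noteq> k then enc d i (stored (Z i) W) else [])
              j = W (d k, j)) \<and>
      R = Max ((\<lambda>d. (\<Sum>k=1..K. real (ell d k)) / real F) ` demands N K))"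

definition d2d_achievable :: "nat \<Rightarrow> nat \<Rightarrow> real \<Rightarrow> nat \<Rightarrow> real \<Rightarrow> bool" where
  "d2d_achievable N K M F R \<longleftrightarrow> (\<forall>b\<ge>1. d2d_scheme N K M F b R)"

end

theory Submission
  imports Defs
begin

text \<open>
  Split the \<open>K = 4m\<close> users into \<open>m\<close> groups of four. Packets are indexed by the 4-set \<open>A\<close> of
  users that do not cache them (so each packet is cached by \<open>t = K - 4\<close> users), and \<open>A\<close> carries
  \<open>row_mult\<close> packets, a number depending only on how \<open>A\<close> meets the groups. A transmission is
  given by a 3-set \<open>C\<close>, a sender \<open>T \<notin> C\<close> and a copy index: it is the XOR, over all users
  \<open>v \<notin> C \<union> {T}\<close>, of a packet of \<open>C \<union> {v}\<close> of the file demanded by \<open>v\<close>. The sender caches every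
  summand and each receiver caches all summands but its own, so every transmission serves \<open>K - 4\<close>
  users and the rate is \<open>4 / (K - 4) = N / M - 1\<close>. The weights \<open>tx_mult\<close> are chosen so that for
  every 4-set \<open>A\<close> and \<open>v \<in> A\<close> the transmissions serving \<open>v\<close> from \<open>A\<close> are exactly as many as the
  packets of \<open>A\<close>; both this balance and the number \<open>F\<close> of packets are then pure counting,
  done by splitting subsets group by group.
\<close>

section \<open>One-shot XOR delivery\<close>

definition xor_bits :: "bool list \<Rightarrow> bool list \<Rightarrow> bool list" where
  "xor_bits a c = map2 (\<noteq>) a c"

definition xor_sum :: "nat \<Rightarrow> ('a \<Rightarrow> bool list) \<Rightarrow> 'a list \<Rightarrow> bool list" where
  "xor_sum b f xs = foldr (\<lambda>x. xor_bits (f x)) xs (replicate b False)"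

lemma length_xor_sum:
  assumes "\<forall>x\<in>set xs. length (f x) = b"
  shows "length (xor_sum b f xs) = b"
  using assms by (induction xs) (auto simp: xor_sum_def xor_bits_def)

lemma xor_sum_cong:
  "(\<And>x. x \<in> set xs \<Longrightarrow> f x = g x) \<Longrightarrow> xor_sum b f xs = xor_sum b g xs"
  by (induction xs) (simp_all add: xor_sum_def)

lemma xor_sum_remove1:
  assumes "k \<in> set xs"
  shows "xor_sum b f xs = xor_bits (f k) (xor_sum b f (remove1 k xs))"
  using assms
proof (induction xs)
  case (Cons x xs)
  show ?case
  proof (cases "x = k")
    case False
    with Cons have "xor_sum b f xs = xor_bits (f k) (xor_sum b f (remove1 k xs))" by simp
    with False show ?thesis
      by (simp add: xor_sum_def xor_bits_def) (rule nth_equalityI; auto)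
  qed (simp add: xor_sum_def)
qed simp

lemma xor_sum_cancel:
  assumes "k \<in> set xs" and "\<forall>x\<in>set xs. length (f x) = b"
  shows "xor_bits (xor_sum b f xs) (xor_sum b f (remove1 k xs)) = f k"
proof -
  have "length (xor_sum b f (remove1 k xs)) = b"
    using assms(2) set_remove1_subset by (intro length_xor_sum) fast
  moreover have "length (f k) = b" using assms by blast
  ultimately show ?thesis
    unfolding xor_sum_remove1[OF assms(1)] xor_bits_def by (intro nth_equalityI) auto
qed

lemma sum_length_filter_eq:
  assumes "\<forall>x\<in>set xs. g x \<in> A" and "finite A"
  shows "(\<Sum>a\<in>A. length (filter (\<lambda>x. g x = a) xs)) = length xs"
  using assms
proof (induction xs)
  case (Cons x xs)
  have "(\<Sum>a\<in>A. length (filter (\<lambda>y. g y = a) (x # xs)))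
      = (\<Sum>a\<in>A. of_bool (g x = a) + length (filter (\<lambda>y. g y = a) xs))"
    by (intro sum.cong) auto
  with Cons show ?case by (simp add: sum.distrib)
qed simp

text \<open>User \<open>k\<close> caches packet \<open>j\<close> of every file iff \<open>cached j k\<close>; transmission \<open>t\<close> is sent by
  \<open>sender t\<close> and is the XOR, over \<open>v \<in> receivers t\<close>, of packet \<open>wanted t v\<close> of the file
  demanded by \<open>v\<close>.\<close>

locale xor_delivery =
  fixes K F :: nat
    and cached :: "nat \<Rightarrow> nat \<Rightarrow> bool"
    and txs :: "'t list"
    and sender :: "'t \<Rightarrow> nat"
    and receivers :: "'t \<Rightarrow> nat set"
    and wanted :: "'t \<Rightarrow> nat \<Rightarrow> nat"
  assumes distinct_txs: "distinct txs"
    and sender_user: "t \<in> set txs \<Longrightarrow> sender t \<in> {1..K}"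
    and receivers_users: "t \<in> set txs \<Longrightarrow> receivers t \<subseteq> {1..K}"
    and wanted_packet: "t \<in> set txs \<Longrightarrow> v \<in> receivers t \<Longrightarrow> wanted t v \<in> {1..F}"
    and sender_caches: "t \<in> set txs \<Longrightarrow> v \<in> receivers t \<Longrightarrow> cached (wanted t v) (sender t)"
    and receiver_lacks: "t \<in> set txs \<Longrightarrow> v \<in> receivers t \<Longrightarrow> \<not> cached (wanted t v) v"
    and receiver_caches_others:
      "t \<in> set txs \<Longrightarrow> v \<in> receivers t \<Longrightarrow> v' \<in> receivers t \<Longrightarrow> v' \<noteq> v \<Longrightarrow> cached (wanted t v') v"
    and delivers: "j \<in> {1..F} \<Longrightarrow> k \<in> {1..K} \<Longrightarrow> \<not> cached j k \<Longrightarrow>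
      \<exists>t\<in>set txs. k \<in> receivers t \<and> wanted t k = j"
begin

definition placement :: "nat \<Rightarrow> nat \<Rightarrow> (nat \<times> nat) set" where
  "placement N k = {1..N} \<times> {j\<in>{1..F}. cached j k}"

definition receiver_list :: "'t \<Rightarrow> nat list" where
  "receiver_list t = sorted_list_of_set (receivers t)"

definition block :: "nat \<Rightarrow> (nat \<Rightarrow> nat) \<Rightarrow> (nat \<times> nat \<Rightarrow> bool list) \<Rightarrow> 't \<Rightarrow> bool list" where
  "block b d W t = xor_sum b (\<lambda>v. W (d v, wanted t v)) (receiver_list t)"

definition sent_by :: "nat \<Rightarrow> 't list" where
  "sent_by k = filter (\<lambda>t. sender t = k) txs"

definition encode :: "nat \<Rightarrow> (nat \<Rightarrow> nat) \<Rightarrow> nat \<Rightarrow> (nat \<times> nat \<Rightarrow> bool list) \<Rightarrow> bool list list" where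
  "encode b d k W = map (block b d W) (sent_by k)"

definition serving :: "nat \<Rightarrow> nat \<Rightarrow> 't" where
  "serving k j = (SOME t. t \<in> set txs \<and> k \<in> receivers t \<and> wanted t k = j)"

definition decode :: "nat \<Rightarrow> (nat \<Rightarrow> nat) \<Rightarrow> nat \<Rightarrow> (nat \<times> nat \<Rightarrow> bool list)
    \<Rightarrow> (nat \<Rightarrow> bool list list) \<Rightarrow> nat \<Rightarrow> bool list" where
  "decode b d k W' Y j =
    (if cached j k then W' (d k, j)
     else let t = serving k j; i = sender t in
       xor_bits (the (map_of (zip (sent_by i) (Y i)) t))
         (xor_sum b (\<lambda>v. W' (d v, wanted t v)) (remove1 k (receiver_list t))))"

lemma card_placement:
  "card (placement N k) = N * card {j\<in>{1..F}. cached j k}"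
  by (simp add: placement_def card_cartesian_product)

lemma set_receiver_list:
  "t \<in> set txs \<Longrightarrow> set (receiver_list t) = receivers t"
  unfolding receiver_list_def using receivers_users finite_subset by (metis finite_atLeastAtMost set_sorted_list_of_set)

lemma set_remove1_receiver_list:
  "t \<in> set txs \<Longrightarrow> set (remove1 k (receiver_list t)) = receivers t - {k}"
  by (metis distinct_sorted_list_of_set receiver_list_def set_receiver_list set_remove1_eq)

lemma demand_file:
  "d \<in> demands N K \<Longrightarrow> k \<in> {1..K} \<Longrightarrow> d k \<in> {1..N}"
  by (auto simp: demands_def)

lemma stored_placement:
  assumes "d \<in> demands N K" "v \<in> {1..K}" "j \<in> {1..F}" "cached j k"
  shows "stored (placement N k) W (d v, j) = W (d v, j)"
  using assms demand_file by (simp add: stored_def placement_def)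

lemma block_from_cache:
  assumes "d \<in> demands N K" "t \<in> set txs"
  shows "block b d (stored (placement N (sender t)) W) t = block b d W t"
  unfolding block_def
proof (rule xor_sum_cong)
  fix v assume "v \<in> set (receiver_list t)"
  then have "v \<in> receivers t" using assms(2) by (simp add: set_receiver_list)
  then show "stored (placement N (sender t)) W (d v, wanted t v) = W (d v, wanted t v)"
    using assms receivers_users wanted_packet sender_caches by (blast intro: stored_placement)
qed

lemma length_block:
  assumes "W \<in> contents N F b" "d \<in> demands N K" "t \<in> set txs"
  shows "length (block b d W t) = b"
  unfolding block_def
proof (rule length_xor_sum, rule ballI)
  fix v assume "v \<in> set (receiver_list t)"
  then have "v \<in> receivers t" using assms(3) by (simp add: set_receiver_list)
  then show "length (W (d v, wanted t v)) = b"
    using assms receivers_users wanted_packet demand_file by (force simp: contents_def)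
qed

lemma serving_delivers:
  assumes "j \<in> {1..F}" "k \<in> {1..K}" "\<not> cached j k"
  shows "serving k j \<in> set txs" "k \<in> receivers (serving k j)" "wanted (serving k j) k = j"
  using someI_ex[OF delivers[OF assms, unfolded Bex_def]] unfolding serving_def by auto

lemma decode_correct:
  assumes W: "W \<in> contents N F b" and d: "d \<in> demands N K" and k: "k \<in> {1..K}" and j: "j \<in> {1..F}"
  shows "decode b d k (stored (placement N k) W)
           (\<lambda>i. if i \<in> {1..K} \<and> i \<noteq> k then encode b d i (stored (placement N i) W) else []) j
         = W (d k, j)"
proof (cases "cached j k")
  case True
  then show ?thesis using stored_placement[OF d k j] by (simp add: decode_def)
next
  case False
  define t where "t = serving k j"
  define i where "i = sender t"
  note t = serving_delivers[OF j k False, folded t_def]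
  have i: "i \<in> {1..K}" "i \<noteq> k"
    using t sender_caches receiver_lacks sender_user unfolding i_def by metis+
  have "the (map_of (zip (sent_by i) (encode b d i (stored (placement N i) W))) t) = block b d W t"
    using t block_from_cache[OF d t(1)] by (simp add: encode_def map_of_zip_map sent_by_def i_def)
  moreover have "xor_sum b (\<lambda>v. stored (placement N k) W (d v, wanted t v)) (remove1 k (receiver_list t))
      = xor_sum b (\<lambda>v. W (d v, wanted t v)) (remove1 k (receiver_list t))"
  proof (rule xor_sum_cong)
    fix v assume "v \<in> set (remove1 k (receiver_list t))"
    then have "v \<in> receivers t" "v \<noteq> k"
      using set_remove1_receiver_list[OF t(1)] by auto
    then show "stored (placement N k) W (d v, wanted t v) = W (d v, wanted t v)"
      using t receivers_users wanted_packet receiver_caches_others by (blast intro: stored_placement[OF d])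
  qed
  ultimately have "decode b d k (stored (placement N k) W)
           (\<lambda>i. if i \<in> {1..K} \<and> i \<noteq> k then encode b d i (stored (placement N i) W) else []) j
      = xor_bits (block b d W t) (xor_sum b (\<lambda>v. W (d v, wanted t v)) (remove1 k (receiver_list t)))"
    using False i by (simp add: decode_def Let_def t_def[symmetric] i_def[symmetric])
  also have "\<dots> = W (d k, wanted t k)"
    unfolding block_def
  proof (rule xor_sum_cancel)
    show "k \<in> set (receiver_list t)" using t by (simp add: set_receiver_list)
    show "\<forall>v\<in>set (receiver_list t). length (W (d v, wanted t v)) = b"
      using W d t(1) receivers_users wanted_packet demand_file
      by (force simp: contents_def set_receiver_list)
  qed
  finally show ?thesis using t(3) by simp
qed

lemma demands_nonempty: "N \<ge> 1 \<Longrightarrow> demands N K \<noteq> {}"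
  by (simp add: demands_def PiE_eq_empty_iff)

lemma total_load: "(\<Sum>k=1..K. real (length (sent_by k))) = real (length txs)"
  using sum_length_filter_eq[of txs sender "{1..K}"] sender_user
  unfolding sent_by_def by (metis finite_atLeastAtMost of_nat_sum)

theorem d2d_scheme:
  assumes "N \<ge> 1"
    and cache: "\<And>k. k \<in> {1..K} \<Longrightarrow> real N * real (card {j\<in>{1..F}. cached j k}) \<le> M * real F"
  shows "d2d_scheme N K M F b (real (length txs) / real F)"
  unfolding d2d_scheme_def
proof (intro exI conjI ballI)
  fix k assume "k \<in> {1..K}"
  show "placement N k \<subseteq> {1..N} \<times> {1..F}" by (auto simp: placement_def)
  show "real (card (placement N k)) \<le> M * real F"
    using cache[OF \<open>k \<in> {1..K}\<close>] by (simp add: card_placement)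
next
  fix d k W assume "d \<in> demands N K" "k \<in> {1..K}" "W \<in> contents N F b"
  show "length (encode b d k (stored (placement N k) W)) = length (sent_by k)"
    by (simp add: encode_def)
next
  fix d k W x assume "d \<in> demands N K" "k \<in> {1..K}" "W \<in> contents N F b"
    and "x \<in> set (encode b d k (stored (placement N k) W))"
  then show "length x = b"
    by (auto simp: encode_def sent_by_def block_from_cache length_block)
next
  fix d k W j assume "d \<in> demands N K" "k \<in> {1..K}" "W \<in> contents N F b" and "j \<in> {1..F}"
  show "decode b d k (stored (placement N k) W)
          (\<lambda>i. if i \<in> {1..K} \<and> i \<noteq> k then encode b d i (stored (placement N i) W) else []) j
        = W (d k, j)"
    by (rule decode_correct) fact+
next
  have "(\<lambda>d. (\<Sum>k=1..K. real (length (sent_by k))) / real F) ` demands N K = {real (length txs) / real F}"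
    using demands_nonempty[OF \<open>N \<ge> 1\<close>] unfolding total_load by auto
  then show "real (length txs) / real F
      = Max ((\<lambda>d. (\<Sum>k=1..K. real (length (sent_by k))) / real F) ` demands N K)"
    by simp
qed

end

section \<open>Subsets of a given size\<close>

definition subsets_of_size :: "'a set \<Rightarrow> nat \<Rightarrow> 'a set set" where
  "subsets_of_size X n = {B. B \<subseteq> X \<and> card B = n}"

lemma finite_subsets_of_size: "finite X \<Longrightarrow> finite (subsets_of_size X n)"
  unfolding subsets_of_size_def by (rule finite_subset[of _ "Pow X"]) auto

lemma card_subsets_of_size: "finite X \<Longrightarrow> card (subsets_of_size X n) = card X choose n"
  unfolding subsets_of_size_def by (rule n_subsets)

lemma subsets_of_size_0: "finite X \<Longrightarrow> subsets_of_size X 0 = {{}}"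
  unfolding subsets_of_size_def by (auto dest: finite_subset)

lemma finite_in_subsets_of_size: "finite X \<Longrightarrow> B \<in> subsets_of_size X n \<Longrightarrow> finite B"
  unfolding subsets_of_size_def by (auto dest: finite_subset)

lemma bij_betw_Un_subsets_of_size:
  assumes "finite U" "finite V" "U \<inter> V = {}"
  shows "bij_betw (\<lambda>(S, B). S \<union> B) {(S, B). S \<subseteq> V \<and> B \<subseteq> U \<and> card S + card B = n}
    (subsets_of_size (V \<union> U) n)"
proof (rule bij_betw_byWitness[where f' = "\<lambda>A. (A \<inter> V, A \<inter> U)"])
  show "\<forall>p\<in>{(S, B). S \<subseteq> V \<and> B \<subseteq> U \<and> card S + card B = n}.
      (\<lambda>A. (A \<inter> V, A \<inter> U)) ((\<lambda>(S, B). S \<union> B) p) = p"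
    using assms(3) by auto
  show "\<forall>A\<in>subsets_of_size (V \<union> U) n. (\<lambda>(S, B). S \<union> B) (A \<inter> V, A \<inter> U) = A"
    by (auto simp: subsets_of_size_def)
  show "(\<lambda>(S, B). S \<union> B) ` {(S, B). S \<subseteq> V \<and> B \<subseteq> U \<and> card S + card B = n}
      \<subseteq> subsets_of_size (V \<union> U) n"
  proof
    fix A assume "A \<in> (\<lambda>(S, B). S \<union> B) ` {(S, B). S \<subseteq> V \<and> B \<subseteq> U \<and> card S + card B = n}"
    then obtain S B where SB: "A = S \<union> B" "S \<subseteq> V" "B \<subseteq> U" "card S + card B = n" by auto
    moreover from SB(2,3) have "S \<inter> B = {}" "finite S" "finite B"
      using assms by (auto dest: finite_subset)
    ultimately show "A \<in> subsets_of_size (V \<union> U) n"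
      by (auto simp: subsets_of_size_def card_Un_disjoint)
  qed
  show "(\<lambda>A. (A \<inter> V, A \<inter> U)) ` subsets_of_size (V \<union> U) n
      \<subseteq> {(S, B). S \<subseteq> V \<and> B \<subseteq> U \<and> card S + card B = n}"
  proof
    fix p assume "p \<in> (\<lambda>A. (A \<inter> V, A \<inter> U)) ` subsets_of_size (V \<union> U) n"
    then obtain A where p: "p = (A \<inter> V, A \<inter> U)" and "A \<in> subsets_of_size (V \<union> U) n" by blast
    then have A: "A \<subseteq> V \<union> U" "card A = n" by (simp_all add: subsets_of_size_def)
    then have "A = (A \<inter> V) \<union> (A \<inter> U)" by blast
    moreover have "finite (A \<inter> V)" "finite (A \<inter> U)" "(A \<inter> V) \<inter> (A \<inter> U) = {}"
      using assms by auto
    ultimately have "card (A \<inter> V) + card (A \<inter> U) = n"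
      using A(2) card_Un_disjoint by metis
    then show "p \<in> {(S, B). S \<subseteq> V \<and> B \<subseteq> U \<and> card S + card B = n}" by (simp add: p)
  qed
qed

lemma sum_subsets_of_size_Un:
  assumes "finite U" "finite V" "U \<inter> V = {}"
  shows "(\<Sum>A\<in>subsets_of_size (V \<union> U) n. h A)
       = (\<Sum>j\<le>n. \<Sum>S\<in>subsets_of_size V j. \<Sum>B\<in>subsets_of_size U (n - j). h (S \<union> B))"
proof -
  define P where "P = {(S, B). S \<subseteq> V \<and> B \<subseteq> U \<and> card S + card B = n}"
  have "(\<Sum>A\<in>subsets_of_size (V \<union> U) n. h A) = (\<Sum>(S, B)\<in>P. h (S \<union> B))"
    using bij_betw_Un_subsets_of_size[OF assms, of n]
    by (simp add: P_def sum.reindex_bij_betw[symmetric] case_prod_unfold)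
  also have "\<dots> = (\<Sum>j\<le>n. \<Sum>(S, B)\<in>{p\<in>P. card (fst p) = j}. h (S \<union> B))"
  proof (rule sum.group[symmetric])
    show "finite P"
      by (rule finite_subset[of _ "Pow V \<times> Pow U"]) (use assms(1,2) in \<open>auto simp: P_def\<close>)
    show "(\<lambda>p. card (fst p)) ` P \<subseteq> {..n}" by (auto simp: P_def)
  qed simp
  also have "\<dots> = (\<Sum>j\<le>n. \<Sum>(S, B)\<in>subsets_of_size V j \<times> subsets_of_size U (n - j). h (S \<union> B))"
  proof (intro sum.cong refl)
    fix j assume "j \<in> {..n}"
    then show "{p\<in>P. card (fst p) = j} = subsets_of_size V j \<times> subsets_of_size U (n - j)"
      by (auto simp: P_def subsets_of_size_def)
  qed
  also have "\<dots> = (\<Sum>j\<le>n. \<Sum>S\<in>subsets_of_size V j. \<Sum>B\<in>subsets_of_size U (n - j). h (S \<union> B))"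
    by (simp add: sum.cartesian_product)
  finally show ?thesis .
qed

lemma card_subsets_of_size_containing:
  assumes "finite V" "u \<in> V" "j \<ge> 1"
  shows "card {S\<in>subsets_of_size V j. u \<in> S} = (card V - 1) choose (j - 1)"
proof -
  have "bij_betw (\<lambda>S. S - {u}) {S\<in>subsets_of_size V j. u \<in> S} (subsets_of_size (V - {u}) (j - 1))"
  proof (rule bij_betw_byWitness[where f' = "insert u"])
    show "\<forall>S\<in>{S\<in>subsets_of_size V j. u \<in> S}. insert u (S - {u}) = S" by auto
    show "\<forall>T\<in>subsets_of_size (V - {u}) (j - 1). insert u T - {u} = T"
      by (auto simp: subsets_of_size_def)
    show "(\<lambda>S. S - {u}) ` {S\<in>subsets_of_size V j. u \<in> S} \<subseteq> subsets_of_size (V - {u}) (j - 1)"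
      using assms(1) by (auto simp: subsets_of_size_def dest: finite_subset)
    show "insert u ` subsets_of_size (V - {u}) (j - 1) \<subseteq> {S\<in>subsets_of_size V j. u \<in> S}"
    proof
      fix S assume "S \<in> insert u ` subsets_of_size (V - {u}) (j - 1)"
      then obtain T where "S = insert u T" "T \<in> subsets_of_size (V - {u}) (j - 1)" by blast
      then have "T \<subseteq> V - {u}" "card T = j - 1" by (simp_all add: subsets_of_size_def)
      moreover have "finite T" "u \<notin> T" using \<open>T \<subseteq> V - {u}\<close> assms(1) by (auto dest: finite_subset)
      ultimately show "S \<in> {S\<in>subsets_of_size V j. u \<in> S}"
        using assms(2,3) \<open>S = insert u T\<close> by (auto simp: subsets_of_size_def)
    qed
  qed
  then have "card {S\<in>subsets_of_size V j. u \<in> S} = card (subsets_of_size (V - {u}) (j - 1))"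
    by (rule bij_betw_same_card)
  then show ?thesis using assms(1,2) by (simp add: card_subsets_of_size)
qed

section \<open>Users in groups of four\<close>

definition group_of :: "nat \<Rightarrow> nat" where
  "group_of x = (x - 1) div 4"

definition group_users :: "nat set \<Rightarrow> nat set" where
  "group_users G = {x. 1 \<le> x \<and> group_of x \<in> G}"

lemma group_of_group_users: "x \<in> group_users G \<Longrightarrow> group_of x \<in> G"
  by (simp add: group_users_def)

lemma group_users_mono: "G \<subseteq> G' \<Longrightarrow> group_users G \<subseteq> group_users G'"
  by (auto simp: group_users_def)

lemma group_users_insert: "group_users (insert g G) = group_users {g} \<union> group_users G"
  by (auto simp: group_users_def)

lemma group_users_disjoint: "g \<notin> G \<Longrightarrow> group_users G \<inter> group_users {g} = {}"
  by (auto simp: group_users_def)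

lemma group_users_lessThan: "group_users {..<m} = {1..4 * m}"
  by (auto simp: group_users_def group_of_def less_mult_imp_div_less dest: div_less_iff_less_mult[THEN iffD1, rotated])

lemma group_users_singleton: "group_users {g} = {4 * g + 1..4 * g + 4}"
  by (auto simp: group_users_def group_of_def)

lemma card_group_users_singleton: "card (group_users {g}) = 4"
  by (simp add: group_users_singleton)

lemma finite_group_users: "finite G \<Longrightarrow> finite (group_users G)"
proof -
  have "group_users G = (\<Union>g\<in>G. group_users {g})" by (auto simp: group_users_def)
  then show "finite G \<Longrightarrow> ?thesis" by (simp add: group_users_singleton)
qed

lemma card_group_users: "finite G \<Longrightarrow> card (group_users G) = 4 * card G"
proof (induction G rule: finite_induct)
  case (insert g G)
  have "card (group_users (insert g G)) = card (group_users {g}) + card (group_users G)"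
    unfolding group_users_insert[of g G] using group_users_disjoint[OF insert(2)]
    by (intro card_Un_disjoint) (auto simp: finite_group_users insert(1))
  with insert show ?case by (simp add: card_group_users_singleton)
qed (simp add: group_users_def)

definition group_pairs :: "nat set \<Rightarrow> nat" where
  "group_pairs A = (\<Sum>x\<in>A. card {y\<in>A. y \<noteq> x \<and> group_of y = group_of x})"

definition group_count :: "nat set \<Rightarrow> nat \<Rightarrow> nat" where
  "group_count A v = card {y\<in>A. group_of y = group_of v}"

lemma group_pairs_empty [simp]: "group_pairs {} = 0"
  by (simp add: group_pairs_def)

lemma group_count_empty [simp]: "group_count {} v = 0"
  by (simp add: group_count_def)

lemma group_count_insert:
  assumes "finite A" "a \<notin> A"
  shows "group_count (insert a A) v = group_count A v + of_bool (group_of a = group_of v)"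
proof -
  have "{y\<in>insert a A. group_of y = group_of v}
      = (if group_of a = group_of v then insert a else id) {y\<in>A. group_of y = group_of v}"
    by auto
  then show ?thesis using assms by (simp add: group_count_def)
qed

lemma group_pairs_insert:
  assumes "finite A" "v \<notin> A"
  shows "group_pairs (insert v A) = group_pairs A + 2 * group_count A v"
proof -
  have new: "{y\<in>insert v A. y \<noteq> v \<and> group_of y = group_of v} = {y\<in>A. group_of y = group_of v}"
    using assms by auto
  have old: "card {y\<in>insert v A. y \<noteq> x \<and> group_of y = group_of x}
      = card {y\<in>A. y \<noteq> x \<and> group_of y = group_of x} + of_bool (group_of v = group_of x)"
    if "x \<in> A" for x
  proof -
    have "{y\<in>insert v A. y \<noteq> x \<and> group_of y = group_of x}
        = (if group_of v = group_of x then insert v else id) {y\<in>A. y \<noteq> x \<and> group_of y = group_of x}"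
      using that assms by auto
    then show ?thesis using assms by simp
  qed
  have "(\<Sum>x\<in>A. card {y\<in>insert v A. y \<noteq> x \<and> group_of y = group_of x})
      = (\<Sum>x\<in>A. card {y\<in>A. y \<noteq> x \<and> group_of y = group_of x} + of_bool (group_of v = group_of x))"
    by (rule sum.cong[OF refl old])
  also have "\<dots> = group_pairs A + group_count A v"
    using assms(1) by (simp add: sum.distrib group_pairs_def group_count_def eq_commute[of "group_of v"] Int_def)
  finally have "(\<Sum>x\<in>A. card {y\<in>insert v A. y \<noteq> x \<and> group_of y = group_of x})
      = group_pairs A + group_count A v" .
  moreover have "group_pairs (insert v A) = card {y\<in>insert v A. y \<noteq> v \<and> group_of y = group_of v}
      + (\<Sum>x\<in>A. card {y\<in>insert v A. y \<noteq> x \<and> group_of y = group_of x})"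
    unfolding group_pairs_def using assms by (rule sum.insert)
  ultimately show ?thesis unfolding new group_count_def by simp
qed

lemma group_pairs_Un:
  assumes "finite S" "finite B" "\<And>x y. x \<in> S \<Longrightarrow> y \<in> B \<Longrightarrow> group_of x \<noteq> group_of y"
  shows "group_pairs (S \<union> B) = group_pairs S + group_pairs B"
  using assms
proof (induction S rule: finite_induct)
  case (insert s S)
  have "{y\<in>S \<union> B. group_of y = group_of s} = {y\<in>S. group_of y = group_of s}"
    using insert.prems by fastforce
  then have "group_count (S \<union> B) s = group_count S s" by (simp add: group_count_def)
  moreover have "s \<notin> B" using insert.prems by blast
  ultimately show ?case
    using insert by (simp add: group_pairs_insert)
qed simp

lemma group_pairs_one_group:
  assumes "finite S" "\<And>x y. x \<in> S \<Longrightarrow> y \<in> S \<Longrightarrow> group_of x = group_of y"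
  shows "group_pairs S = card S * (card S - 1)"
  using assms
proof (induction S rule: finite_induct)
  case (insert s S)
  have "{y\<in>S. group_of y = group_of s} = S" using insert.prems by auto
  then have "group_count S s = card S" by (simp add: group_count_def)
  with insert show ?case by (cases "card S") (auto simp: group_pairs_insert)
qed simp

lemma group_pairs_doubleton:
  "a \<noteq> b \<Longrightarrow> group_pairs {a, b} = 2 * of_bool (group_of a = group_of b)"
  using group_pairs_insert[of "{b}" a] group_pairs_insert[of "{}" b] group_count_insert[of "{}" b a]
  by auto

lemma group_count_triple:
  assumes "a \<noteq> b" "a \<noteq> c" "b \<noteq> c"
  shows "group_count {a, b, c} v = of_bool (group_of a = group_of v) + of_bool (group_of b = group_of v)
    + of_bool (group_of c = group_of v)"
  using assms group_count_insert[of "{b, c}" a v] group_count_insert[of "{c}" b v] group_count_insert[of "{}" c v]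
  by auto

lemma group_pairs_triple:
  assumes "a \<noteq> b" "a \<noteq> c" "b \<noteq> c"
  shows "group_pairs {a, b, c} = 2 * (of_bool (group_of a = group_of b) + of_bool (group_of a = group_of c)
    + of_bool (group_of b = group_of c))"
  using assms group_pairs_insert[of "{b, c}" a] group_pairs_doubleton[of b c]
    group_count_insert[of "{c}" b a] group_count_insert[of "{}" c a]
  by auto

lemma group_pairs_card_2: "card B = 2 \<Longrightarrow> group_pairs B \<in> {0, 2}"
  by (auto simp: card_2_iff group_pairs_doubleton)

lemma group_pairs_card_3: "card B = 3 \<Longrightarrow> group_pairs B \<in> {0, 2, 6}"
  by (auto simp: card_3_iff group_pairs_triple)

section \<open>Counting subsets by their same-group pairs\<close>

definition group_pair_sum :: "nat set \<Rightarrow> nat \<Rightarrow> (nat \<Rightarrow> nat) \<Rightarrow> nat" where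
  "group_pair_sum X n h = (\<Sum>B\<in>subsets_of_size X n. h (group_pairs B))"

lemma group_pairs_Un_group:
  assumes "finite G" "g \<notin> G" "S \<in> subsets_of_size (group_users {g}) j" "B \<in> subsets_of_size (group_users G) k"
  shows "group_pairs (S \<union> B) = j * (j - 1) + group_pairs B"
proof -
  have S: "S \<subseteq> group_users {g}" "card S = j"
    using assms(3) by (simp_all add: subsets_of_size_def)
  have B: "B \<subseteq> group_users G" using assms(4) by (simp add: subsets_of_size_def)
  have "finite S" using S(1) by (rule finite_subset) (simp add: group_users_singleton)
  have "finite B" using B(1) finite_group_users[OF assms(1)] by (rule finite_subset)
  have gS: "group_of x = g" if "x \<in> S" for x
    using that S(1) group_of_group_users by blast
  have gB: "group_of y \<in> G" if "y \<in> B" for y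
    using that B(1) group_of_group_users by blast
  have "group_pairs (S \<union> B) = group_pairs S + group_pairs B"
    using \<open>finite S\<close> \<open>finite B\<close> by (rule group_pairs_Un) (use gS gB assms(2) in force)
  moreover have "group_pairs S = j * (j - 1)"
    using group_pairs_one_group[OF \<open>finite S\<close>] gS S(2) by simp
  ultimately show ?thesis by simp
qed

lemma group_pair_sum_insert_group:
  assumes "finite G" "g \<notin> G"
  shows "group_pair_sum (group_users (insert g G)) n h
    = (\<Sum>j\<le>n. (4 choose j) * group_pair_sum (group_users G) (n - j) (\<lambda>q. h (j * (j - 1) + q)))"
proof -
  have "group_pair_sum (group_users (insert g G)) n h
      = (\<Sum>j\<le>n. \<Sum>S\<in>subsets_of_size (group_users {g}) j. \<Sum>B\<in>subsets_of_size (group_users G) (n - j).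
           h (group_pairs (S \<union> B)))"
    unfolding group_pair_sum_def group_users_insert[of g G]
    by (rule sum_subsets_of_size_Un)
      (simp_all add: finite_group_users assms group_users_disjoint)
  also have "\<dots> = (\<Sum>j\<le>n. \<Sum>S\<in>subsets_of_size (group_users {g}) j.
      group_pair_sum (group_users G) (n - j) (\<lambda>q. h (j * (j - 1) + q)))"
    unfolding group_pair_sum_def using group_pairs_Un_group[OF assms] by (intro sum.cong refl) simp
  also have "\<dots> = (\<Sum>j\<le>n. (4 choose j) * group_pair_sum (group_users G) (n - j) (\<lambda>q. h (j * (j - 1) + q)))"
    by (simp add: card_subsets_of_size group_users_singleton)
  finally show ?thesis .
qed

lemma sum_subsets_containing_insert_group:
  assumes "finite G" "g \<notin> G" "u \<in> group_users {g}"
  shows "(\<Sum>A\<in>subsets_of_size (group_users (insert g G)) n. if u \<in> A then h (group_pairs A) else 0)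
    = (\<Sum>j\<le>n. (if j = 0 then 0 else 3 choose (j - 1))
         * group_pair_sum (group_users G) (n - j) (\<lambda>q. h (j * (j - 1) + q)))"
proof -
  have u: "u \<notin> B" if "B \<in> subsets_of_size (group_users G) k" for B k
    using that assms(3) group_users_disjoint[OF assms(2)] by (auto simp: subsets_of_size_def)
  have "(\<Sum>A\<in>subsets_of_size (group_users (insert g G)) n. if u \<in> A then h (group_pairs A) else 0)
      = (\<Sum>j\<le>n. \<Sum>S\<in>subsets_of_size (group_users {g}) j. \<Sum>B\<in>subsets_of_size (group_users G) (n - j).
           if u \<in> S \<union> B then h (group_pairs (S \<union> B)) else 0)"
    unfolding group_users_insert[of g G]
    by (rule sum_subsets_of_size_Un)
      (simp_all add: finite_group_users assms group_users_disjoint)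
  also have "\<dots> = (\<Sum>j\<le>n. \<Sum>S\<in>subsets_of_size (group_users {g}) j.
      if u \<in> S then group_pair_sum (group_users G) (n - j) (\<lambda>q. h (j * (j - 1) + q)) else 0)"
    unfolding group_pair_sum_def using group_pairs_Un_group[OF assms(1,2)] u
    by (intro sum.cong refl) simp
  also have "\<dots> = (\<Sum>j\<le>n. card {S\<in>subsets_of_size (group_users {g}) j. u \<in> S}
      * group_pair_sum (group_users G) (n - j) (\<lambda>q. h (j * (j - 1) + q)))"
    by (simp add: sum.If_cases Int_def finite_subsets_of_size group_users_singleton)
  also have "\<dots> = (\<Sum>j\<le>n. (if j = 0 then 0 else 3 choose (j - 1))
      * group_pair_sum (group_users G) (n - j) (\<lambda>q. h (j * (j - 1) + q)))"
  proof (intro sum.cong refl)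
    fix j
    have "card {S\<in>subsets_of_size (group_users {g}) j. u \<in> S} = (if j = 0 then 0 else 3 choose (j - 1))"
      using card_subsets_of_size_containing[of "group_users {g}" u j] assms(3)
      by (cases "j = 0") (simp_all add: subsets_of_size_0 group_users_singleton)
    then show "card {S\<in>subsets_of_size (group_users {g}) j. u \<in> S}
        * group_pair_sum (group_users G) (n - j) (\<lambda>q. h (j * (j - 1) + q))
      = (if j = 0 then 0 else 3 choose (j - 1)) * group_pair_sum (group_users G) (n - j) (\<lambda>q. h (j * (j - 1) + q))"
      by simp
  qed
  finally show ?thesis .
qed

lemma group_pair_sum_0: "finite X \<Longrightarrow> group_pair_sum X 0 h = h 0"
  by (simp add: group_pair_sum_def subsets_of_size_0)

lemma group_pair_sum_1: "finite X \<Longrightarrow> group_pair_sum X 1 h = h 0 * card X"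
proof -
  assume "finite X"
  have "h (group_pairs B) = h 0" if "B \<in> subsets_of_size X 1" for B
    using that group_pairs_insert[of "{}"] by (auto simp: subsets_of_size_def card_1_singleton_iff)
  then show ?thesis
    using \<open>finite X\<close> by (simp add: group_pair_sum_def card_subsets_of_size)
qed

lemma group_pair_sum_2: "finite X \<Longrightarrow> h 2 = h 0 \<Longrightarrow> group_pair_sum X 2 h = h 0 * (card X choose 2)"
proof -
  assume "finite X" "h 2 = h 0"
  moreover have "group_pairs B \<in> {0, 2}" if "B \<in> subsets_of_size X 2" for B
    using that by (intro group_pairs_card_2) (simp add: subsets_of_size_def)
  ultimately have "h (group_pairs B) = h 0" if "B \<in> subsets_of_size X 2" for B
    using that by fastforce
  then show ?thesis
    using \<open>finite X\<close> by (simp add: group_pair_sum_def card_subsets_of_size)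
qed

lemmas group_pair_sum_0_1 = group_pair_sum_0 group_pair_sum_1 group_pair_sum_1[unfolded One_nat_def]

lemma sum_atMost_numeral:
  "(\<Sum>j\<le>(2::nat). f j) = f 0 + f 1 + f 2"
  "(\<Sum>j\<le>(3::nat). f j) = f 0 + f 1 + f 2 + f 3"
  "(\<Sum>j\<le>(4::nat). f j) = f 0 + f 1 + f 2 + f 3 + f 4"
  by (simp_all add: numeral_eq_Suc add.assoc)

lemma binomial_small:
  "(3::nat) choose 1 = 3" "(3::nat) choose 2 = 3" "(3::nat) choose 3 = 1"
  "(4::nat) choose 1 = 4" "(4::nat) choose 2 = 6" "(4::nat) choose 3 = 4" "(4::nat) choose 4 = 1"
  by (simp_all add: eval_nat_numeral)

text \<open>With \<open>h = (\<lambda>p. of_bool (p = q))\<close>, \<open>group_pair_sum X n h\<close> counts the \<open>n\<close>-subsets of \<open>X\<close>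
  with \<open>q\<close> same-group pairs.\<close>

lemmas group_pair_sum_recurrence =
  group_pair_sum_insert_group sum_atMost_numeral group_pair_sum_0_1 group_pair_sum_2
  finite_group_users card_group_users binomial_small

lemma group_pair_sum_2_0:
  "finite G \<Longrightarrow> int (group_pair_sum (group_users G) 2 (\<lambda>p. of_bool (p = 0)))
     = 8 * int (card G) * (int (card G) - 1)"
proof (induction G rule: finite_induct)
  case (insert g G)
  then show ?case
    by (simp add: group_pair_sum_recurrence algebra_simps)
qed (simp add: group_pair_sum_def subsets_of_size_def group_users_def)

lemma group_pair_sum_2_2:
  "finite G \<Longrightarrow> group_pair_sum (group_users G) 2 (\<lambda>p. of_bool (p = 2)) = 6 * card G"
proof (induction G rule: finite_induct)
  case (insert g G)
  then show ?case
    by (simp add: group_pair_sum_recurrence algebra_simps)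
qed (simp add: group_pair_sum_def subsets_of_size_def group_users_def)

lemma group_pair_sum_3_0:
  "finite G \<Longrightarrow> 3 * int (group_pair_sum (group_users G) 3 (\<lambda>p. of_bool (p = 0)))
     = 32 * int (card G) * (int (card G) - 1) * (int (card G) - 2)"
proof (induction G rule: finite_induct)
  case (insert g G)
  then show ?case using group_pair_sum_2_0[OF insert(1)]
    by (simp add: group_pair_sum_recurrence algebra_simps)
qed (simp add: group_pair_sum_def subsets_of_size_def group_users_def)

lemma group_pair_sum_3_2:
  "finite G \<Longrightarrow> int (group_pair_sum (group_users G) 3 (\<lambda>p. of_bool (p = 2)))
     = 24 * int (card G) * (int (card G) - 1)"
proof (induction G rule: finite_induct)
  case (insert g G)
  then show ?case using group_pair_sum_2_2[OF insert(1)]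
    by (simp add: group_pair_sum_recurrence algebra_simps)
qed (simp add: group_pair_sum_def subsets_of_size_def group_users_def)

lemma group_pair_sum_3_6:
  "finite G \<Longrightarrow> group_pair_sum (group_users G) 3 (\<lambda>p. of_bool (p = 6)) = 4 * card G"
proof (induction G rule: finite_induct)
  case (insert g G)
  then show ?case
    by (simp add: group_pair_sum_recurrence algebra_simps)
qed (simp add: group_pair_sum_def subsets_of_size_def group_users_def)

text \<open>A 4-set meets the groups in the pattern 1+1+1+1, 2+1+1, 2+2, 3+1 or 4 according as its
  \<open>group_pairs\<close> is 0, 2, 4, 6 or 12.\<close>

definition row_mult :: "nat \<Rightarrow> nat" where
  "row_mult q = (if q = 0 then 9 else if q = 2 \<or> q = 4 then 8 else if q = 6 then 4 else 0)"

lemma row_mult_simps: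
  "row_mult 0 = 9" "row_mult 2 = 8" "row_mult 4 = 8" "row_mult 6 = 4" "row_mult 12 = 0"
  by (simp_all add: row_mult_def)

lemma group_pair_sum_3_row_mult:
  "group_pair_sum X 3 row_mult = 9 * group_pair_sum X 3 (\<lambda>p. of_bool (p = 0))
     + 8 * group_pair_sum X 3 (\<lambda>p. of_bool (p = 2)) + 4 * group_pair_sum X 3 (\<lambda>p. of_bool (p = 6))"
proof -
  have "row_mult (group_pairs B) = 9 * of_bool (group_pairs B = 0) + 8 * of_bool (group_pairs B = 2)
      + 4 * of_bool (group_pairs B = 6)" if "B \<in> subsets_of_size X 3" for B
    using group_pairs_card_3[of B] that by (auto simp: subsets_of_size_def row_mult_def)
  then show ?thesis
    by (simp add: group_pair_sum_def sum.distrib sum_distrib_left)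
qed

lemma two_mult_choose_two: "2 * (n choose 2) = n * (n - 1)"
  by (induction n) (auto simp: numeral_2_eq_2 algebra_simps)

lemma row_mult_degree:
  assumes "finite G" "g \<notin> G" "u \<in> group_users {g}"
  shows "int (\<Sum>A\<in>subsets_of_size (group_users (insert g G)) 4. if u \<in> A then row_mult (group_pairs A) else 0)
       = 16 * int (card G) * (6 * (int (card G) + 1) * int (card G) + 1)"
proof -
  have fin: "finite (group_users G)" and card: "card (group_users G) = 4 * card G"
    using assms(1) by (simp_all add: finite_group_users card_group_users)
  have pairs_2: "group_pair_sum (group_users G) 2 (\<lambda>q. row_mult (Suc (Suc q))) = 8 * (4 * card G choose 2)"
    using group_pair_sum_2[OF fin, of "\<lambda>q. row_mult (Suc (Suc q))"]
    by (simp add: card row_mult_def eval_nat_numeral)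
  have "(\<Sum>A\<in>subsets_of_size (group_users (insert g G)) 4. if u \<in> A then row_mult (group_pairs A) else 0)
     = group_pair_sum (group_users G) 3 row_mult + 3 * (8 * (4 * card G choose 2)) + 3 * (4 * (4 * card G))"
    unfolding sum_subsets_containing_insert_group[OF assms]
    by (simp add: sum_atMost_numeral binomial_small
        group_pair_sum_0_1 pairs_2 fin card row_mult_simps)
  moreover have "int (2 * (4 * card G choose 2)) = int (4 * card G) * (int (4 * card G) - 1)"
    unfolding two_mult_choose_two by (cases "card G") auto
  ultimately show ?thesis
    using group_pair_sum_3_0[OF assms(1)] group_pair_sum_3_2[OF assms(1)] group_pair_sum_3_6[OF assms(1)]
    by (simp add: group_pair_sum_3_row_mult algebra_simps)
qed

text \<open>The weights solve the balance equation \<open>sum_tx_mult_eq_row_mult\<close> below.\<close>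

definition tx_mult :: "nat \<Rightarrow> nat \<Rightarrow> nat" where
  "tx_mult p k = (if p = 0 \<and> k = 1 then 1 else if p = 2 \<and> k = 2 then 4 else if p = 6 \<and> k = 3 then 4 else 0)"

lemma card_3_group_cases:
  assumes "card C = 3"
  obtains (distinct) a b c where "C = {a, b, c}" "a \<noteq> b" "a \<noteq> c" "b \<noteq> c"
      "group_of a \<noteq> group_of b" "group_of a \<noteq> group_of c" "group_of b \<noteq> group_of c"
  | (pair) a b c where "C = {a, b, c}" "a \<noteq> b" "a \<noteq> c" "b \<noteq> c"
      "group_of a = group_of b" "group_of c \<noteq> group_of a"
  | (triple) a b c where "C = {a, b, c}" "a \<noteq> b" "a \<noteq> c" "b \<noteq> c"
      "group_of a = group_of b" "group_of c = group_of a"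
proof -
  obtain x y z where C: "C = {x, y, z}" "x \<noteq> y" "y \<noteq> z" "x \<noteq> z"
    using assms card_3_iff by metis
  then have "C = {x, z, y}" "C = {y, z, x}" by auto
  with C that show ?thesis
    by (cases "group_of x = group_of y"; cases "group_of x = group_of z"; cases "group_of y = group_of z")
      (metis | simp)+
qed

lemma sum_tx_mult_groupwise:
  assumes "finite G" "Q \<subseteq> G" "v \<in> group_users G" "v \<notin> C"
    and "\<And>T. tx_mult (group_pairs C) (group_count C T) = w * of_bool (group_of T \<in> Q)"
  shows "(\<Sum>T\<in>group_users G - C - {v}. tx_mult (group_pairs C) (group_count C T))
    = w * (card (group_users Q - C) - of_bool (group_of v \<in> Q))"
proof -
  have "group_users Q - C - {v} = {T\<in>group_users G - C - {v}. group_of T \<in> Q}"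
    using group_users_mono[OF assms(2)] by (auto simp: group_users_def)
  then have "(\<Sum>T\<in>group_users G - C - {v}. tx_mult (group_pairs C) (group_count C T))
      = w * card (group_users Q - C - {v})"
    using assms finite_group_users[OF assms(1)] by (simp add: sum.If_cases Int_def)
  moreover have "v \<in> group_users Q - C \<longleftrightarrow> group_of v \<in> Q"
    using assms(3,4) by (simp add: group_users_def)
  ultimately show ?thesis by (simp add: card_Diff_singleton_if)
qed

lemma sum_tx_mult_eq_row_mult:
  assumes G: "finite G" and C: "C \<in> subsets_of_size (group_users G) 3"
    and v: "v \<in> group_users G" "v \<notin> C"
  shows "(\<Sum>T\<in>group_users G - C - {v}. tx_mult (group_pairs C) (group_count C T))
    = row_mult (group_pairs (insert v C))"
proof -
  have CU: "C \<subseteq> group_users G" and "card C = 3" using C by (simp_all add: subsets_of_size_def)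
  have "finite C" using CU finite_group_users[OF G] by (rule finite_subset)
  have pairs_insert: "group_pairs (insert v C) = group_pairs C + 2 * group_count C v"
    by (rule group_pairs_insert) fact+
  note groupwise = sum_tx_mult_groupwise[OF G _ v]
  from \<open>card C = 3\<close> show ?thesis
  proof (cases rule: card_3_group_cases)
    case (distinct a b c)
    let ?Q = "{group_of a, group_of b, group_of c}"
    have mult: "tx_mult (group_pairs C) (group_count C T) = 1 * of_bool (group_of T \<in> ?Q)" for T
      using distinct by (cases "group_of T = group_of a"; cases "group_of T = group_of c")
        (simp_all add: group_pairs_triple group_count_triple tx_mult_def)
    have sub: "?Q \<subseteq> G" using distinct CU group_of_group_users by blast
    have card: "card (group_users ?Q - C) = 9"
    proof -
      have "C \<subseteq> group_users ?Q" using distinct CU by (auto simp: group_users_def)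
      then show ?thesis
        using \<open>finite C\<close> \<open>card C = 3\<close> distinct by (simp add: card_Diff_subset card_group_users)
    qed
    have row: "row_mult (group_pairs (insert v C)) = (if group_of v \<in> ?Q then 8 else 9)"
      using pairs_insert distinct by (auto simp: group_pairs_triple group_count_triple row_mult_def)
    show ?thesis using groupwise[OF sub mult] card row by simp
  next
    case (pair a b c)
    have mult: "tx_mult (group_pairs C) (group_count C T) = 4 * of_bool (group_of T \<in> {group_of a})" for T
      using pair by (cases "group_of T = group_of a"; cases "group_of T = group_of c")
        (simp_all add: group_pairs_triple group_count_triple tx_mult_def)
    have sub: "{group_of a} \<subseteq> G" using pair CU group_of_group_users by blast
    have card: "card (group_users {group_of a} - C) = 2"
    proof -
      have "group_users {group_of a} - C = group_users {group_of a} - {a, b}"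
        using pair by (auto simp: group_users_def)
      moreover have "{a, b} \<subseteq> group_users {group_of a}" using pair CU by (auto simp: group_users_def)
      ultimately show ?thesis using pair by (simp add: card_Diff_subset card_group_users_singleton)
    qed
    have row: "row_mult (group_pairs (insert v C)) = (if group_of v = group_of a then 4 else 8)"
      using pairs_insert pair by (auto simp: group_pairs_triple group_count_triple row_mult_def)
    show ?thesis using groupwise[OF sub mult] card row by simp
  next
    case (triple a b c)
    have mult: "tx_mult (group_pairs C) (group_count C T) = 4 * of_bool (group_of T \<in> {group_of a})" for T
      using triple by (cases "group_of T = group_of a"; cases "group_of T = group_of c")
        (simp_all add: group_pairs_triple group_count_triple tx_mult_def)
    have sub: "{group_of a} \<subseteq> G" using triple CU group_of_group_users by blast
    have card: "card (group_users {group_of a} - C) = 1"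
    proof -
      have "C \<subseteq> group_users {group_of a}" using triple CU by (auto simp: group_users_def)
      then show ?thesis
        using \<open>finite C\<close> \<open>card C = 3\<close> by (simp add: card_Diff_subset card_group_users_singleton)
    qed
    have row: "row_mult (group_pairs (insert v C)) = (if group_of v = group_of a then 0 else 4)"
      using pairs_insert triple by (auto simp: group_pairs_triple group_count_triple row_mult_def)
    show ?thesis using groupwise[OF sub mult] card row by simp
  qed
qed

section \<open>The construction\<close>

definition rows :: "nat \<Rightarrow> (nat set \<times> nat) set" where
  "rows m = (SIGMA A:subsets_of_size (group_users {..<m}) 4. {..<row_mult (group_pairs A)})"

definition user_degree :: "nat \<Rightarrow> nat" where
  "user_degree m = 16 * (m - 1) * (6 * m * (m - 1) + 1)"

lemma finite_rows: "finite (rows m)"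
  by (simp add: rows_def finite_subsets_of_size finite_group_users)

lemma sum_row_mult_containing:
  assumes "k \<in> group_users {..<m}"
  shows "(\<Sum>A\<in>subsets_of_size (group_users {..<m}) 4. if k \<in> A then row_mult (group_pairs A) else 0)
    = user_degree m"
proof -
  define g where "g = group_of k"
  have g: "g \<in> {..<m}" "k \<in> group_users {g}"
    using assms by (simp_all add: g_def group_of_group_users group_users_def)
  then have "insert g ({..<m} - {g}) = {..<m}" "card ({..<m} - {g}) = m - 1" by auto
  then have "int (\<Sum>A\<in>subsets_of_size (group_users {..<m}) 4. if k \<in> A then row_mult (group_pairs A) else 0)
      = 16 * int (m - 1) * (6 * (int (m - 1) + 1) * int (m - 1) + 1)"
    using row_mult_degree[of "{..<m} - {g}" g k] g by simp
  also have "\<dots> = int (user_degree m)"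
    using g(1) by (cases m) (simp_all add: user_degree_def algebra_simps)
  finally show ?thesis by (simp only: of_nat_eq_iff)
qed

lemma card_rows_containing:
  assumes "k \<in> group_users {..<m}"
  shows "card {\<rho>\<in>rows m. k \<in> fst \<rho>} = user_degree m"
proof -
  have "{\<rho>\<in>rows m. k \<in> fst \<rho>}
      = (SIGMA A:{A\<in>subsets_of_size (group_users {..<m}) 4. k \<in> A}. {..<row_mult (group_pairs A)})"
    by (auto simp: rows_def)
  then show ?thesis
    using sum_row_mult_containing[OF assms]
    by (simp add: finite_subsets_of_size finite_group_users sum.inter_filter)
qed

lemma card_rows: "card (rows m) = m * user_degree m"
proof -
  let ?U = "group_users {..<m}"
  have "4 * card (rows m) = (\<Sum>A\<in>subsets_of_size ?U 4. card A * row_mult (group_pairs A))"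
    by (simp add: rows_def finite_subsets_of_size finite_group_users sum_distrib_left subsets_of_size_def)
  also have "\<dots> = (\<Sum>A\<in>subsets_of_size ?U 4. \<Sum>k\<in>?U. if k \<in> A then row_mult (group_pairs A) else 0)"
  proof (rule sum.cong[OF refl])
    fix A assume "A \<in> subsets_of_size ?U 4"
    then have "{k\<in>?U. k \<in> A} = A" by (auto simp: subsets_of_size_def)
    then show "card A * row_mult (group_pairs A) = (\<Sum>k\<in>?U. if k \<in> A then row_mult (group_pairs A) else 0)"
      by (simp add: sum.If_cases finite_group_users Int_def)
  qed
  also have "\<dots> = (\<Sum>k\<in>?U. user_degree m)"
    by (subst sum.swap) (simp add: sum_row_mult_containing)
  also have "\<dots> = 4 * (m * user_degree m)"
    by (simp add: card_group_users)
  finally show ?thesis by simp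
qed

definition transmissions :: "nat \<Rightarrow> (nat set \<times> nat \<times> nat) set" where
  "transmissions m = (SIGMA C:subsets_of_size (group_users {..<m}) 3.
     SIGMA T:group_users {..<m} - C. {..<tx_mult (group_pairs C) (group_count C T)})"

definition tx_receivers :: "nat \<Rightarrow> nat set \<times> nat \<times> nat \<Rightarrow> nat set" where
  "tx_receivers m t = group_users {..<m} - fst t - {fst (snd t)}"

definition serving_choices :: "nat \<Rightarrow> nat set \<Rightarrow> nat \<Rightarrow> (nat \<times> nat) set" where
  "serving_choices m C v = (SIGMA T:group_users {..<m} - C - {v}. {..<tx_mult (group_pairs C) (group_count C T)})"

definition row_index :: "nat \<Rightarrow> nat set \<Rightarrow> nat \<Rightarrow> nat \<times> nat \<Rightarrow> nat" where
  "row_index m C v = (SOME f. bij_betw f (serving_choices m C v) {..<row_mult (group_pairs (insert v C))})"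

definition tx_row :: "nat \<Rightarrow> nat set \<times> nat \<times> nat \<Rightarrow> nat \<Rightarrow> nat set \<times> nat" where
  "tx_row m t v = (insert v (fst t), row_index m (fst t) v (snd t))"

lemma finite_transmissions: "finite (transmissions m)"
  by (simp add: transmissions_def finite_subsets_of_size finite_group_users)

lemma row_index_bij:
  assumes "C \<in> subsets_of_size (group_users {..<m}) 3" "v \<in> group_users {..<m}" "v \<notin> C"
  shows "bij_betw (row_index m C v) (serving_choices m C v) {..<row_mult (group_pairs (insert v C))}"
proof -
  have "card (serving_choices m C v) = row_mult (group_pairs (insert v C))"
    using sum_tx_mult_eq_row_mult[OF _ assms]
    by (simp add: serving_choices_def finite_group_users)
  then have "\<exists>f. bij_betw f (serving_choices m C v) {..<row_mult (group_pairs (insert v C))}"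
    by (intro finite_same_card_bij) (simp_all add: serving_choices_def finite_group_users)
  then show ?thesis unfolding row_index_def by (rule someI_ex)
qed

lemma transmission_receiver_iff:
  "((C, T, j) \<in> transmissions m \<and> v \<in> tx_receivers m (C, T, j))
    \<longleftrightarrow> C \<in> subsets_of_size (group_users {..<m}) 3 \<and> v \<in> group_users {..<m} \<and> v \<notin> C
        \<and> (T, j) \<in> serving_choices m C v"
  by (auto simp: transmissions_def tx_receivers_def serving_choices_def)

lemma inj_on_tx_row:
  "inj_on (\<lambda>(t, v). (tx_row m t v, v)) (SIGMA t:transmissions m. tx_receivers m t)"
proof (rule inj_onI)
  fix p q assume p: "p \<in> (SIGMA t:transmissions m. tx_receivers m t)"
    and q: "q \<in> (SIGMA t:transmissions m. tx_receivers m t)"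
    and eq: "(\<lambda>(t, v). (tx_row m t v, v)) p = (\<lambda>(t, v). (tx_row m t v, v)) q"
  obtain C T j v C' T' j' v' where pq: "p = ((C, T, j), v)" "q = ((C', T', j'), v')"
    by (metis prod.collapse)
  note p' = p[unfolded pq, simplified, unfolded transmission_receiver_iff]
  note q' = q[unfolded pq, simplified, unfolded transmission_receiver_iff]
  have "v' = v" "insert v C = insert v C'" using eq by (auto simp: pq tx_row_def)
  then have "C' = C" using p' q' by (metis insert_ident)
  with eq have "row_index m C v (T, j) = row_index m C v (T', j')"
    by (simp add: pq tx_row_def \<open>v' = v\<close>)
  then have "(T, j) = (T', j')"
    using p' q' row_index_bij \<open>C' = C\<close> \<open>v' = v\<close> by (metis bij_betw_imp_inj_on inj_onD)
  then show "p = q" by (simp add: pq \<open>C' = C\<close> \<open>v' = v\<close>)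
qed

lemma tx_row_in_rows:
  assumes "t \<in> transmissions m" "v \<in> tx_receivers m t"
  shows "tx_row m t v \<in> rows m"
proof -
  obtain C T j where t: "t = (C, T, j)" by (cases t)
  then have C: "C \<in> subsets_of_size (group_users {..<m}) 3" "v \<in> group_users {..<m}" "v \<notin> C"
    and Tj: "(T, j) \<in> serving_choices m C v"
    using assms transmission_receiver_iff by blast+
  have "row_index m C v (T, j) < row_mult (group_pairs (insert v C))"
    using row_index_bij[OF C] Tj by (auto dest: bij_betwE)
  moreover have "finite C"
    using C(1) by (rule finite_in_subsets_of_size[OF finite_group_users, rotated]) simp
  then have "insert v C \<in> subsets_of_size (group_users {..<m}) 4"
    using C by (simp add: subsets_of_size_def)
  ultimately show ?thesis by (simp add: t tx_row_def rows_def)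
qed

lemma rows_delivered:
  assumes "\<rho> \<in> rows m" "v \<in> fst \<rho>"
  shows "\<exists>t\<in>transmissions m. v \<in> tx_receivers m t \<and> tx_row m t v = \<rho>"
proof -
  obtain A i where \<rho>: "\<rho> = (A, i)" and A: "A \<in> subsets_of_size (group_users {..<m}) 4"
    and i: "i < row_mult (group_pairs A)" and "v \<in> A"
    using assms by (auto simp: rows_def)
  define C where "C = A - {v}"
  have "finite A" using A finite_in_subsets_of_size[OF finite_group_users] by blast
  then have C: "C \<in> subsets_of_size (group_users {..<m}) 3" "v \<in> group_users {..<m}" "v \<notin> C"
    using A \<open>v \<in> A\<close> by (auto simp: C_def subsets_of_size_def)
  have "insert v C = A" using \<open>v \<in> A\<close> by (auto simp: C_def)
  then obtain T j where Tj: "(T, j) \<in> serving_choices m C v" "row_index m C v (T, j) = i"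
    using row_index_bij[OF C] i by (metis bij_betw_def imageE lessThan_iff prod.collapse)
  then have "(C, T, j) \<in> transmissions m" "v \<in> tx_receivers m (C, T, j)"
    using C transmission_receiver_iff by blast+
  moreover have "tx_row m (C, T, j) v = \<rho>"
    using \<open>insert v C = A\<close> Tj(2) by (simp add: \<rho> tx_row_def)
  ultimately show ?thesis by blast
qed

lemma bij_tx_row:
  "bij_betw (\<lambda>(t, v). (tx_row m t v, v)) (SIGMA t:transmissions m. tx_receivers m t) (SIGMA \<rho>:rows m. fst \<rho>)"
  unfolding bij_betw_def
proof (intro conjI inj_on_tx_row subset_antisym subsetI)
  fix x assume "x \<in> (\<lambda>(t, v). (tx_row m t v, v)) ` (SIGMA t:transmissions m. tx_receivers m t)"
  then show "x \<in> (SIGMA \<rho>:rows m. fst \<rho>)"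
    using tx_row_in_rows by (auto simp: tx_row_def)
next
  fix x assume "x \<in> (SIGMA \<rho>:rows m. fst \<rho>)"
  then obtain \<rho> v where x: "x = (\<rho>, v)" "\<rho> \<in> rows m" "v \<in> fst \<rho>" by auto
  then obtain t where "t \<in> transmissions m" "v \<in> tx_receivers m t" "tx_row m t v = \<rho>"
    using rows_delivered by blast
  then show "x \<in> (\<lambda>(t, v). (tx_row m t v, v)) ` (SIGMA t:transmissions m. tx_receivers m t)"
    using x(1) by force
qed

lemma card_transmissions: "card (transmissions m) * (4 * m - 4) = 4 * card (rows m)"
proof -
  have "card (tx_receivers m t) = 4 * m - 4" if "t \<in> transmissions m" for t
  proof -
    obtain C T j where t: "t = (C, T, j)" by (cases t)
    then have "C \<subseteq> group_users {..<m}" "card C = 3" "T \<in> group_users {..<m} - C"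
      using that by (auto simp: transmissions_def subsets_of_size_def)
    moreover have "finite C" using calculation(1) finite_group_users by (rule finite_subset) simp
    ultimately show ?thesis
      by (simp add: t tx_receivers_def card_Diff_subset card_group_users group_users_lessThan card_Diff_singleton_if)
  qed
  then have "card (SIGMA t:transmissions m. tx_receivers m t) = card (transmissions m) * (4 * m - 4)"
    by (simp add: finite_transmissions tx_receivers_def finite_group_users)
  moreover have "card (SIGMA \<rho>:rows m. fst \<rho>) = 4 * card (rows m)"
  proof -
    have A: "fst \<rho> \<in> subsets_of_size (group_users {..<m}) 4" if "\<rho> \<in> rows m" for \<rho>
      using that by (auto simp: rows_def)
    have "card (fst \<rho>) = 4" if "\<rho> \<in> rows m" for \<rho>
      using A[OF that] by (simp add: subsets_of_size_def)
    moreover have "finite (fst \<rho>)" if "\<rho> \<in> rows m" for \<rho>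
      using finite_group_users[OF finite_lessThan] A[OF that] by (rule finite_in_subsets_of_size)
    ultimately
    show ?thesis by (simp add: finite_rows)
  qed
  ultimately show ?thesis using bij_betw_same_card[OF bij_tx_row] by simp
qed

lemma sender_not_in_tx_row: "t \<in> transmissions m \<Longrightarrow> v \<in> tx_receivers m t \<Longrightarrow> fst (snd t) \<notin> fst (tx_row m t v)"
  by (auto simp: transmissions_def tx_receivers_def tx_row_def)

lemma xor_delivery_rows:
  assumes label: "bij_betw label (rows m) {1..F}" and txs: "distinct txs" "set txs = transmissions m"
  shows "xor_delivery (4 * m) F (\<lambda>j k. k \<notin> fst (inv_into (rows m) label j)) txs (\<lambda>t. fst (snd t))
    (tx_receivers m) (\<lambda>t v. label (tx_row m t v))"
proof
  have row_label: "inv_into (rows m) label (label \<rho>) = \<rho>" if "\<rho> \<in> rows m" for \<rho>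
    using that label by (simp add: bij_betw_inv_into_left)
  have U: "group_users {..<m} = {1..4 * m}" by (rule group_users_lessThan)
  show "distinct txs" by (fact txs(1))
  fix t assume t: "t \<in> set txs"
  then show "fst (snd t) \<in> {1..4 * m}"
    using U txs(2) by (auto simp: transmissions_def)
  show "tx_receivers m t \<subseteq> {1..4 * m}" using U by (auto simp: tx_receivers_def)
  fix v assume v: "v \<in> tx_receivers m t"
  have tx: "tx_row m t v \<in> rows m" using t v txs(2) by (simp add: tx_row_in_rows)
  show "label (tx_row m t v) \<in> {1..F}" using tx label by (auto dest: bij_betwE)
  show "fst (snd t) \<notin> fst (inv_into (rows m) label (label (tx_row m t v)))"
    using t v txs(2) sender_not_in_tx_row by (simp add: row_label[OF tx])
  show "\<not> v \<notin> fst (inv_into (rows m) label (label (tx_row m t v)))"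
    unfolding row_label[OF tx] by (simp add: tx_row_def)
  fix v' assume "v' \<in> tx_receivers m t" "v' \<noteq> v"
  then show "v \<notin> fst (inv_into (rows m) label (label (tx_row m t v')))"
    using v row_label tx_row_in_rows t txs(2) by (auto simp: tx_row_def tx_receivers_def)
next
  fix j k assume j: "j \<in> {1..F}" and "\<not> k \<notin> fst (inv_into (rows m) label j)"
  moreover have "inv_into (rows m) label j \<in> rows m" "label (inv_into (rows m) label j) = j"
    using j label by (auto simp: bij_betw_inv_into_right bij_betwE[OF bij_betw_inv_into])
  ultimately show "\<exists>t\<in>set txs. k \<in> tx_receivers m t \<and> label (tx_row m t k) = j"
    using rows_delivered[of "inv_into (rows m) label j" m k] txs(2) by metis
qed

lemma card_uncached_rows:
  assumes label: "bij_betw label (rows m) {1..F}" and k: "k \<in> {1..4 * m}"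
  shows "card {j\<in>{1..F}. k \<notin> fst (inv_into (rows m) label j)} = (m - 1) * user_degree m"
proof -
  have row: "inv_into (rows m) label j \<in> rows m" "label (inv_into (rows m) label j) = j"
    if "j \<in> {1..F}" for j
    using that label by (auto simp: bij_betw_inv_into_right bij_betwE[OF bij_betw_inv_into])
  have "{j\<in>{1..F}. k \<notin> fst (inv_into (rows m) label j)} = label ` {\<rho>\<in>rows m. k \<notin> fst \<rho>}"
  proof (intro subset_antisym subsetI)
    fix j assume "j \<in> {j\<in>{1..F}. k \<notin> fst (inv_into (rows m) label j)}"
    then show "j \<in> label ` {\<rho>\<in>rows m. k \<notin> fst \<rho>}"
      using row by (metis (mono_tags, lifting) image_eqI mem_Collect_eq)
  next
    fix j assume "j \<in> label ` {\<rho>\<in>rows m. k \<notin> fst \<rho>}"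
    then show "j \<in> {j\<in>{1..F}. k \<notin> fst (inv_into (rows m) label j)}"
      using label by (auto simp: bij_betw_inv_into_left dest: bij_betwE)
  qed
  then have "card {j\<in>{1..F}. k \<notin> fst (inv_into (rows m) label j)} = card {\<rho>\<in>rows m. k \<notin> fst \<rho>}"
    using label by (metis (no_types, lifting) bij_betw_def card_image inj_on_subset mem_Collect_eq subsetI)
  also have "\<dots> = card (rows m) - card {\<rho>\<in>rows m. k \<in> fst \<rho>}"
    using finite_rows by (simp add: card_Diff_subset[symmetric] set_diff_eq) (metis Collect_conj_eq Collect_mem_eq)
  finally show ?thesis
    using k card_rows_containing card_rows by (simp add: group_users_lessThan diff_mult_distrib)
qed

theorem d2d_scheme_groups_of_four:
  fixes m N b :: nat and M :: real
  assumes "m \<ge> 2" "N \<ge> 1" "M = real N * (real m - 1) / real m"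
  shows "d2d_scheme N (4 * m) M (m * user_degree m) b (4 / (4 * real m - 4))"
proof -
  define F where "F = m * user_degree m"
  obtain label where label: "bij_betw label (rows m) {1..F}"
    using finite_same_card_bij[OF finite_rows, of "{1..F}"] by (auto simp: F_def card_rows)
  obtain txs where txs: "distinct txs" "set txs = transmissions m"
    using finite_distinct_list[OF finite_transmissions] by metis
  interpret xor_delivery "4 * m" F "\<lambda>j k. k \<notin> fst (inv_into (rows m) label j)" txs "\<lambda>t. fst (snd t)"
    "tx_receivers m" "\<lambda>t v. label (tx_row m t v)"
    using label txs by (rule xor_delivery_rows)
  have "d2d_scheme N (4 * m) M F b (real (length txs) / real F)"
  proof (rule d2d_scheme)
    fix k assume "k \<in> {1..4 * m}"
    have "real (m - 1) = real m - 1" using assms(1) by simp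
    then show "real N * real (card {j\<in>{1..F}. k \<notin> fst (inv_into (rows m) label j)}) \<le> M * real F"
      unfolding card_uncached_rows[OF label \<open>k \<in> {1..4 * m}\<close>] using assms(1)
      by (simp add: assms(3) F_def)
  qed fact
  moreover have "real (length txs) / real F = 4 / (4 * real m - 4)"
  proof -
    have "length txs = card (transmissions m)" using txs by (metis distinct_card)
    moreover have "real (4 * m - 4) = 4 * real m - 4" using assms(1) by (simp add: of_nat_diff)
    ultimately have "real (length txs) * (4 * real m - 4) = 4 * real F"
      using arg_cong[OF card_transmissions[of m], of real] by (simp add: F_def card_rows)
    moreover have "F > 0" using assms(1) by (simp add: F_def user_degree_def)
    ultimately show ?thesis using assms(1) by (simp add: field_simps)
  qed
  ultimately show ?thesis by (simp add: F_def)
qed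

theorem mainTheorem8:
  fixes N K m :: nat and M :: real
  assumes "N \<ge> 1" and "K = 4 * m" and "m \<ge> 5"
    and "0 < M" and "M \<le> real N"
    and "real K * M / real N = real K - 4"
  shows "d2d_achievable N K M (K * (K - 4) * (3 * K * (K - 4) + 8) div 8) (real N / M - 1)"
proof -
  have N: "real N > 0" using assms(1) by simp
  have M: "M = real N * (real m - 1) / real m"
    using assms(2,3,6) N by (simp add: field_simps)
  have "K * (K - 4) * (3 * K * (K - 4) + 8) = 8 * (m * user_degree m)"
    using assms(2,3) by (cases m) (simp_all add: user_degree_def algebra_simps)
  then have F: "K * (K - 4) * (3 * K * (K - 4) + 8) div 8 = m * user_degree m" by simp
  have R: "real N / M - 1 = 4 / (4 * real m - 4)"
    unfolding M using N assms(3) by (simp add: field_simps)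
  show ?thesis
    unfolding d2d_achievable_def F R
    using d2d_scheme_groups_of_four[of m N M] assms(1,2,3) M by simp
qed

end
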